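(* Let $c_1=2$, let $c_2\ge4$ be a real number, let $c_3\in(0,1)$, and let $c_4=8H$ where $H\ge2$. Define $g_1(m)=-c_3m+c_1\sqrt{m}\ln(c_2m)+c_4\ln(m)$. Then for all real $m\ge2$, $$g_1(m)\le\frac{132c_1c_4}{c_3}\left[\ln\!\left(\frac{10\sqrt{c_2c_4}}{c_3}\right)\right]^2.$$ *)

theory Defs
  imports Complex_Main
begin

end

theory Submission
  imports Defs
begin

text \<open>Split \<open>c\<^sub>3 m\<close> into two halves. The tangent-line bound
  \<open>ln x \<le> ln t + x / t - 1\<close> turns \<open>2 \<surd>m ln (c\<^sub>2 m)\<close> into a concave quadratic in \<open>\<surd>m\<close>,
  which the first half absorbs up to \<open>16 (ln (16 \<surd>c\<^sub>2 / c\<^sub>3))\<^sup>2 / c\<^sub>3\<close>; the second half absorbs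
  \<open>c\<^sub>4 ln m\<close> up to \<open>c\<^sub>4 ln (2 c\<^sub>4 / c\<^sub>3)\<close> by the same tangent bound at \<open>t = 2 c\<^sub>4 / c\<^sub>3\<close>. Both logarithms
  are at most \<open>2 L\<close> with \<open>L = ln (10 \<surd>(c\<^sub>2 c\<^sub>4) / c\<^sub>3) \<ge> 1\<close>, so the whole expression
  is at most \<open>3 c\<^sub>4 L\<^sup>2 / c\<^sub>3\<close>, far below the claimed bound.\<close>

lemma ln_le_tangent:
  fixes x t :: real
  assumes "0 < x" and "0 < t"
  shows "ln x \<le> ln t + x / t - 1"
  using ln_le_minus_one[of "x / t"] assms by (simp add: ln_div)

lemma linear_minus_square_le:
  fixes a b x :: real
  assumes "0 < a"
  shows "b * x - a * x\<^sup>2 \<le> b\<^sup>2 / (4 * a)"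
proof -
  have "0 \<le> (b - 2 * a * x)\<^sup>2" by simp
  then have "4 * a * (b * x - a * x\<^sup>2) \<le> b\<^sup>2"
    by (simp add: algebra_simps power2_eq_square)
  then show ?thesis
    using assms by (simp add: field_simps)
qed

lemma log_minus_linear_le:
  fixes a c x :: real
  assumes "0 < a" and "0 < c" and "0 < x"
  shows "c * ln x - a * x \<le> c * (ln (c / a) - 1)"
proof -
  have "ln x \<le> ln (c / a) + x / (c / a) - 1"
    using ln_le_tangent[of x "c / a"] assms by simp
  then have "c * ln x \<le> c * (ln (c / a) + x / (c / a) - 1)"
    using assms(2) by (simp add: mult_left_mono)
  also have "\<dots> = c * (ln (c / a) - 1) + a * x"
    using assms by (simp add: field_simps)
  finally show ?thesis by simp
qed

lemma sqrt_log_minus_linear_le: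
  fixes a b m :: real
  assumes "0 < a" and "0 < b" and "0 < m"
  shows "2 * sqrt m * ln (b * m) - a * m / 2 \<le> 16 * (ln (16 * sqrt b / a))\<^sup>2 / a"
proof -
  define s where "s = sqrt m"
  define l where "l = ln (16 * sqrt b / a)"
  have s: "0 < s" "s\<^sup>2 = m"
    using assms(3) by (simp_all add: s_def)
  have ks: "0 < sqrt b * s"
    using assms(2) s by simp
  have "b * m = (sqrt b * s)\<^sup>2"
    using assms(2) s by (simp add: power_mult_distrib)
  moreover have "ln (sqrt b * s) \<le> l + a * s / 16 - 1"
    using ln_le_tangent[OF ks, of "16 * sqrt b / a"] assms unfolding l_def by (simp add: mult.commute)
  ultimately have "ln (b * m) \<le> 2 * l + a * s / 8"
    using ks by (simp add: ln_realpow)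
  then have "2 * s * ln (b * m) \<le> 2 * s * (2 * l + a * s / 8)"
    using s by (simp add: mult_left_mono)
  then have "2 * s * ln (b * m) - a * m / 2 \<le> (4 * l) * s - (a / 4) * s\<^sup>2"
    using s by (simp add: algebra_simps power2_eq_square)
  also have "\<dots> \<le> (4 * l)\<^sup>2 / (4 * (a / 4))"
    using assms(1) by (intro linear_minus_square_le) simp
  finally show ?thesis
    by (simp add: s_def l_def power_mult_distrib)
qed

lemma ln_constants_bounds:
  fixes a b c :: real
  assumes "0 < a" and "a < 1" and "4 \<le> b" and "16 \<le> c"
  defines "R \<equiv> 10 * sqrt (b * c) / a"
  shows "0 \<le> ln (16 * sqrt b / a)" and "ln (16 * sqrt b / a) \<le> ln R"
    and "ln (2 * c / a) \<le> 2 * ln R" and "1 \<le> ln R"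
proof -
  have sqrt_b: "2 \<le> sqrt b" and sqrt_c: "4 \<le> sqrt c"
    using real_sqrt_le_mono[of 4 b] real_sqrt_le_mono[of 16 c] assms by simp_all
  have R: "R = 10 * sqrt b * sqrt c / a"
    by (simp add: R_def real_sqrt_mult)
  show "0 \<le> ln (16 * sqrt b / a)"
    using sqrt_b assms(1,2) by (simp add: field_simps)
  have "16 * sqrt b \<le> 10 * sqrt b * sqrt c"
    using mult_left_mono[OF sqrt_c, of "10 * sqrt b"] sqrt_b by linarith
  then have "16 * sqrt b / a \<le> R"
    using assms(1) by (simp add: R divide_right_mono)
  moreover have "0 < 16 * sqrt b / a"
    using assms(1,3) by (simp add: field_simps)
  ultimately show "ln (16 * sqrt b / a) \<le> ln R"
    by (rule ln_mono)
  have "80 \<le> 10 * sqrt b * sqrt c"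
    using mult_mono[OF sqrt_b sqrt_c] assms(3) by simp
  then have R_ge: "80 \<le> R"
    using assms(1,2) by (simp add: R field_simps)
  then show "1 \<le> ln R"
    using exp_le ln_ge_iff[of R 1] by simp
  have "2 * c * a \<le> 100 * b * c"
    using assms mult_left_mono[of a 1 c] mult_right_mono[of 4 b c] by simp
  then have "2 * c / a \<le> R\<^sup>2"
    using assms(1) by (simp add: R_def power_divide power_mult_distrib field_simps power2_eq_square)
  then have "ln (2 * c / a) \<le> ln (R\<^sup>2)"
    using assms(1,4) by (intro ln_mono) simp_all
  then show "ln (2 * c / a) \<le> 2 * ln R"
    using R_ge by (simp add: ln_realpow)
qed

theorem lemma1:
  fixes c1 c2 c3 c4 H m :: real
  assumes "c1 = 2" and "c2 \<ge> 4" and "0 < c3" and "c3 < 1"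
    and "H \<ge> 2" and "c4 = 8 * H" and "m \<ge> 2"
  shows "- c3 * m + c1 * sqrt m * ln (c2 * m) + c4 * ln m
         \<le> 132 * c1 * c4 / c3 * (ln (10 * sqrt (c2 * c4) / c3)) ^ 2"
proof -
  define L where "L = ln (10 * sqrt (c2 * c4) / c3)"
  have c4: "16 \<le> c4"
    using assms(5,6) by simp
  note bounds = ln_constants_bounds[OF assms(3,4,2) c4, folded L_def]
  have "2 * sqrt m * ln (c2 * m) - c3 * m / 2 \<le> 16 * (ln (16 * sqrt c2 / c3))\<^sup>2 / c3"
    using sqrt_log_minus_linear_le assms(2,3,7) by simp
  also have "\<dots> \<le> c4 * L\<^sup>2 / c3"
    using bounds(1,2) c4 assms(3) by (intro divide_right_mono mult_mono power_mono) simp_all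
  finally have first: "2 * sqrt m * ln (c2 * m) - c3 * m / 2 \<le> c4 * L\<^sup>2 / c3" .
  have L_le: "L \<le> L\<^sup>2 / c3"
    using bounds(4) assms(3,4) mult_right_mono[of c3 L L] by (simp add: field_simps power2_eq_square)
  have "c4 * ln m - c3 / 2 * m \<le> c4 * (ln (c4 / (c3 / 2)) - 1)"
    using log_minus_linear_le[of "c3 / 2" c4 m] assms(3,7) c4 by simp
  also have "\<dots> \<le> c4 * (2 * (L\<^sup>2 / c3))"
    using bounds(3) L_le c4 by (intro mult_left_mono) (simp_all add: ac_simps)
  finally have second: "c4 * ln m - c3 * m / 2 \<le> 2 * (c4 * L\<^sup>2 / c3)" by simp
  have "0 \<le> c4 * L\<^sup>2 / c3"
    using c4 assms(3) by simp
  moreover have "132 * 2 * c4 / c3 * L\<^sup>2 = 264 * (c4 * L\<^sup>2 / c3)"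
    by simp
  ultimately show ?thesis
    unfolding assms(1) L_def[symmetric] using first second by linarith
qed

end
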